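(* Let $\tilde R\le0$ and let the intervention set $\mathcal I$ be partial; write $\tilde V^*(d_0)=\sup_\pi\tilde V^\pi(d_0)$. (1) For any policy $\pi$, $\tilde V^*(d_0)\ge\tilde J^\pi_+$, where $\tilde J^\pi_+=\frac1{1-\gamma}\mathbb E_{(s,a)\sim\tilde d^\pi}[r(s,a)\mathbb 1\{(s,a)\in(\mathcal S_{\mathrm{safe}}\times\mathcal A)\setminus\mathcal I\}]$. (2) If $\tilde{\mathcal M}$ admits an optimal policy, then it admits an optimal policy $\tilde\pi^*$ with $\mathbb E_{(s,a)\sim\tilde d^{\tilde\pi^*}}[\mathbb 1\{(s,a)\in\mathcal I\}]=0$. (3) If $\tilde R<0$, every optimal policy $\tilde\pi^*$ of $\tilde{\mathcal M}$ satisfies $\mathbb E_{(s,a)\sim\tilde d^{\tilde\pi^*}}[\mathbb 1\{(s,a)\in\mathcal I\}]=0$.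
   Context: $\mathcal M=(\mathcal S,\mathcal A,P,r,\gamma)$ is a discounted MDP with discrete state and action spaces, reward $r(s,a)\in[0,1]$, discount $\gamma\in[0,1)$, initial distribution $d_0$. $\mathcal S$ contains two distinguished states $s_\triangleright,s_\circ$ forming $\mathcal S_{\mathrm{unsafe}}$; $\mathcal S_{\mathrm{safe}}=\mathcal S\setminus\mathcal S_{\mathrm{unsafe}}$; from $s_\triangleright$ every action leads to $s_\circ$, $s_\circ$ is absorbing, $r=0$ on $\mathcal S_{\mathrm{unsafe}}$. Policies are stationary. An intervention rule $\mathcal G=(\bar Q,\mu,\eta)$ (backup policy $\mu$, $\eta\in[0,1]$, $\bar Q:\mathcal S_{\mathrm{safe}}\times\mathcal A\to[0,1]$) has intervention set $\mathcal I=\{(s,a)\in\mathcal S_{\mathrm{safe}}\times\mathcal A:\bar Q(s,a)-\mathbb E_{a'\sim\mu(\cdot|s)}\bar Q(s,a')>\eta\}$; a set $\mathcal X\subseteq\mathcal S_{\mathrm{safe}}\times\mathcal A$ is partial if for every $(s,a)\in\mathcal X$ there is $a'$ with $(s,a')\notin\mathcal X$. The absorbing MDP $\tilde{\mathcal M}=(\mathcal S\cup\{s_\dagger\},\mathcal A,\tilde P,\tilde r,\gamma)$ has $\tilde r(s,a)=\tilde R$ if $(s,a)\in\mathcal I$, $\tilde r(s_\dagger,a)=0$, $\tilde r=r$ otherwise; $\tilde P(\cdot|s,a)$ is the point mass at $s_\dagger$ if $(s,a)\in\mathcal I$ or $s=s_\dagger$, else $P(\cdot|s,a)$. Policies are extended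 to $s_\dagger$ arbitrarily. $\tilde V^\pi(d_0)$ is the value of $\pi$ in $\tilde{\mathcal M}$ from $s_0\sim d_0$, $\tilde d^\pi(s,a)=(1-\gamma)\sum_t\gamma^t\Pr(s_t=s,a_t=a)$ in $\tilde{\mathcal M}$; a policy is optimal if it attains $\tilde V^*(d_0)$. *)

theory Defs
  imports "HOL-Probability.Probability"
begin

primrec sa_dist :: "('s \<Rightarrow> 'a \<Rightarrow> 's pmf) \<Rightarrow> ('s \<Rightarrow> 'a pmf) \<Rightarrow> 's pmf \<Rightarrow> nat \<Rightarrow> ('s \<times> 'a) pmf" where
  "sa_dist P pol d0 0 = bind_pmf d0 (\<lambda>s. map_pmf (\<lambda>a. (s, a)) (pol s))"
| "sa_dist P pol d0 (Suc t) =
     bind_pmf (sa_dist P pol d0 t) (\<lambda>(s, a). bind_pmf (P s a) (\<lambda>s'. map_pmf (\<lambda>a'. (s', a')) (pol s')))"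

definition mdp_value :: "('s \<Rightarrow> 'a \<Rightarrow> 's pmf) \<Rightarrow> ('s \<Rightarrow> 'a \<Rightarrow> real) \<Rightarrow> real \<Rightarrow> ('s \<Rightarrow> 'a pmf) \<Rightarrow> 's pmf \<Rightarrow> real" where
  "mdp_value P r \<gamma> pol d0 =
     (\<Sum>t. \<gamma> ^ t * measure_pmf.expectation (sa_dist P pol d0 t) (\<lambda>(s, a). r s a))"

definition occupancy :: "('s \<Rightarrow> 'a \<Rightarrow> 's pmf) \<Rightarrow> real \<Rightarrow> ('s \<Rightarrow> 'a pmf) \<Rightarrow> 's pmf \<Rightarrow> ('s \<times> 'a) \<Rightarrow> real" where
  "occupancy P \<gamma> pol d0 x = (1 - \<gamma>) * (\<Sum>t. \<gamma> ^ t * pmf (sa_dist P pol d0 t) x)"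

definition occ_expect :: "('s \<Rightarrow> 'a \<Rightarrow> 's pmf) \<Rightarrow> real \<Rightarrow> ('s \<Rightarrow> 'a pmf) \<Rightarrow> 's pmf \<Rightarrow> ('s \<times> 'a \<Rightarrow> real) \<Rightarrow> real" where
  "occ_expect P \<gamma> pol d0 f = infsum (\<lambda>x. occupancy P \<gamma> pol d0 x * f x) UNIV"

definition intervention_set :: "'s set \<Rightarrow> ('s \<Rightarrow> 'a \<Rightarrow> real) \<Rightarrow> ('s \<Rightarrow> 'a pmf) \<Rightarrow> real \<Rightarrow> ('s \<times> 'a) set" where
  "intervention_set Ssafe Qb mu \<eta> =
     {(s, a). s \<in> Ssafe \<and> Qb s a - measure_pmf.expectation (mu s) (\<lambda>a'. Qb s a') > \<eta>}"

definition partial_set :: "('s \<times> 'a) set \<Rightarrow> bool" where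
  "partial_set X \<longleftrightarrow> (\<forall>(s, a) \<in> X. \<exists>a'. (s, a') \<notin> X)"

text \<open>Absorbing MDP: state space 's option, None is the absorbing state s_dagger.\<close>
definition abs_P :: "('s \<Rightarrow> 'a \<Rightarrow> 's pmf) \<Rightarrow> ('s \<times> 'a) set \<Rightarrow> 's option \<Rightarrow> 'a \<Rightarrow> 's option pmf" where
  "abs_P P I so a = (case so of None \<Rightarrow> return_pmf None
      | Some s \<Rightarrow> if (s, a) \<in> I then return_pmf None else map_pmf Some (P s a))"

definition abs_r :: "('s \<Rightarrow> 'a \<Rightarrow> real) \<Rightarrow> ('s \<times> 'a) set \<Rightarrow> real \<Rightarrow> 's option \<Rightarrow> 'a \<Rightarrow> real" where
  "abs_r r I R so a = (case so of None \<Rightarrow> 0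
      | Some s \<Rightarrow> if (s, a) \<in> I then R else r s a)"

end

theory Submission
  imports Defs
begin

text \<open>The reward of the absorbing MDP splits as \<open>kept_reward r I + R \<cdot> 1\<^sub>J\<close>, where \<open>J\<close> is the
  intervention set lifted to the absorbing state space; hence
  \<open>V\<^sup>\<pi> = D\<^sup>\<pi>(kept_reward) + R \<cdot> D\<^sup>\<pi>(1\<^sub>J)\<close> with \<open>D\<close> the discounted expectation, and the
  occupancy expectation of any bounded nonnegative \<open>f\<close> is \<open>(1 - \<gamma>) D\<^sup>\<pi>(f)\<close>.
  Since \<open>I\<close> is partial, every policy \<open>\<pi>\<close> can be repaired by redirecting each intervened
  action to an accepted one. The repaired policy never reaches \<open>J\<close>, and its state-action
  distributions dominate those of \<open>\<pi>\<close> at every time on the pairs \<open>(Some s, a)\<close> with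
  \<open>(s, a) \<notin> I\<close>, because such pairs are reachable only through pairs of the same kind.
  Hence the value of the repaired policy is at least \<open>D\<^sup>\<pi>(kept_reward)\<close>, which for
  \<open>R \<le> 0\<close> is at least \<open>V\<^sup>\<pi>\<close>, with equality only if \<open>R \<cdot> D\<^sup>\<pi>(1\<^sub>J) = 0\<close>; all three claims follow.\<close>

lemma pmf_bind_policy_pair:
  "pmf (bind_pmf m (\<lambda>s. map_pmf (\<lambda>a. (s, a)) (pol s))) (s, a) = pmf m s * pmf (pol s) a"
proof -
  have "pmf (map_pmf (\<lambda>a. (s', a)) (pol s')) (s, a) = indicator {s} s' * pmf (pol s) a" for s'
  proof (cases "s' = s")
    case True
    have "pmf (map_pmf (Pair s) (pol s)) (Pair s a) = pmf (pol s) a"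
      by (rule pmf_map_inj') (auto simp: inj_def)
    then show ?thesis using True by simp
  next
    case False
    then show ?thesis by (subst pmf_map_outside) auto
  qed
  then show ?thesis by (simp add: pmf_bind measure_pmf_single)
qed

lemma pmf_sa_dist_0: "pmf (sa_dist P pol d 0) (s, a) = pmf d s * pmf (pol s) a"
  by (simp add: pmf_bind_policy_pair)

lemma pmf_sa_dist_Suc:
  "pmf (sa_dist P pol d (Suc t)) (s, a) =
     measure_pmf.expectation (sa_dist P pol d t) (\<lambda>(x, b). pmf (P x b) s) * pmf (pol s) a"
proof -
  have "sa_dist P pol d (Suc t) =
      bind_pmf (sa_dist P pol d t) (\<lambda>(x, b). bind_pmf (P x b) (\<lambda>s'. map_pmf (\<lambda>a'. (s', a')) (pol s')))"
    by simp
  then show ?thesis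
    by (simp only: pmf_bind[of "sa_dist P pol d t"] case_prod_beta' pmf_bind_policy_pair) simp
qed

lemma integrable_measure_pmf_bounded:
  fixes f :: "'b \<Rightarrow> real"
  assumes "\<And>x. \<bar>f x\<bar> \<le> B"
  shows "integrable (measure_pmf p) f"
  by (rule measure_pmf.integrable_const_bound[where B=B]) (use assms in auto)

lemma abs_expectation_pmf_le:
  fixes f :: "'b \<Rightarrow> real"
  assumes "\<And>x. \<bar>f x\<bar> \<le> B"
  shows "\<bar>measure_pmf.expectation p f\<bar> \<le> B"
proof -
  have "\<bar>measure_pmf.expectation p f\<bar> \<le> measure_pmf.expectation p (\<lambda>x. \<bar>f x\<bar>)"
    by (rule integral_abs_bound)
  also have "\<dots> \<le> B"
    using assms by (intro measure_pmf.integral_le_const integrable_measure_pmf_bounded[where B=B]) auto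
  finally show ?thesis .
qed

lemma ennreal_expectation_pmf:
  fixes F :: "'b \<Rightarrow> real"
  assumes "\<And>x. 0 \<le> F x" "\<And>x. F x \<le> B"
  shows "ennreal (measure_pmf.expectation p F)
    = (\<integral>\<^sup>+ x. ennreal (pmf p x) * ennreal (F x) \<partial>count_space UNIV)"
proof -
  have "integrable (measure_pmf p) F"
    by (rule integrable_measure_pmf_bounded[where B=B]) (use assms in \<open>auto intro: order.trans\<close>)
  then show ?thesis
    by (subst nn_integral_eq_integral[symmetric]) (auto simp: assms nn_integral_measure_pmf)
qed

lemma expectation_pmf_mono:
  fixes F :: "'b \<Rightarrow> real"
  assumes F: "\<And>x. 0 \<le> F x" "\<And>x. F x \<le> B"
    and pq: "\<And>x. F x \<noteq> 0 \<Longrightarrow> pmf p x \<le> pmf q x"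
  shows "measure_pmf.expectation p F \<le> measure_pmf.expectation q F"
proof -
  have "(\<integral>\<^sup>+ x. ennreal (pmf p x) * ennreal (F x) \<partial>count_space UNIV)
      \<le> (\<integral>\<^sup>+ x. ennreal (pmf q x) * ennreal (F x) \<partial>count_space UNIV)"
    by (rule nn_integral_mono) (metis ennreal_leI mult_zero_right ennreal_0 mult_right_mono zero_le pq)
  then show ?thesis
    by (simp add: ennreal_expectation_pmf[OF F, symmetric] ennreal_le_iff integral_nonneg_AE F)
qed

lemma pmf_sa_dist_mono_on:
  assumes closed: "\<And>x b y a. (y, a) \<in> G \<Longrightarrow> pmf (P x b) y \<noteq> 0 \<Longrightarrow> (x, b) \<in> G"
    and pol: "\<And>y a. (y, a) \<in> G \<Longrightarrow> pmf (pol1 y) a \<le> pmf (pol2 y) a"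
    and "z \<in> G"
  shows "pmf (sa_dist P pol1 d t) z \<le> pmf (sa_dist P pol2 d t) z"
  using \<open>z \<in> G\<close>
proof (induction t arbitrary: z)
  case 0
  then show ?case
    by (cases z) (simp add: pmf_sa_dist_0 mult_left_mono pol del: sa_dist.simps)
next
  case (Suc t)
  obtain y a where z: "z = (y, a)" by force
  have "measure_pmf.expectation (sa_dist P pol1 d t) (\<lambda>(x, b). pmf (P x b) y)
      \<le> measure_pmf.expectation (sa_dist P pol2 d t) (\<lambda>(x, b). pmf (P x b) y)"
  proof (rule expectation_pmf_mono[where B=1])
    fix xb :: "'a \<times> 'b"
    assume "(case xb of (x, b) \<Rightarrow> pmf (P x b) y) \<noteq> 0"
    then have "xb \<in> G" using closed Suc.prems z by (cases xb) auto
    then show "pmf (sa_dist P pol1 d t) xb \<le> pmf (sa_dist P pol2 d t) xb" by (rule Suc.IH)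
  qed (auto simp: pmf_le_1)
  then show ?case using Suc.prems pol[of y a] z
    by (simp only: pmf_sa_dist_Suc) (intro mult_mono integral_nonneg_AE; simp split: prod.split)
qed

lemma pmf_sa_dist_eq_0:
  assumes "\<And>y a. (y, a) \<in> Z \<Longrightarrow> pmf (pol y) a = 0" and "z \<in> Z"
  shows "pmf (sa_dist P pol d t) z = 0"
  using assms by (cases t; cases z) (auto simp: pmf_sa_dist_Suc pmf_sa_dist_0 simp del: sa_dist.simps)

text \<open>The \<open>SOME\<close> below has a witness only at states where \<open>J\<close> is partial.\<close>

definition repair_policy :: "('s \<times> 'a) set \<Rightarrow> ('s \<Rightarrow> 'a pmf) \<Rightarrow> 's \<Rightarrow> 'a pmf" where
  "repair_policy J pol s = map_pmf (\<lambda>a. if (s, a) \<in> J then (SOME b. (s, b) \<notin> J) else a) (pol s)"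

lemma pmf_repair_policy_ge:
  assumes "(s, a) \<notin> J"
  shows "pmf (pol s) a \<le> pmf (repair_policy J pol s) a"
proof -
  have "pmf (pol s) a = measure (pol s) {a}" by (simp add: measure_pmf_single)
  also have "\<dots> \<le> measure (pol s) ((\<lambda>a. if (s, a) \<in> J then (SOME b. (s, b) \<notin> J) else a) -` {a})"
    using assms by (intro measure_pmf.finite_measure_mono) auto
  finally show ?thesis by (simp add: repair_policy_def pmf_map)
qed

lemma pmf_repair_policy_eq_0:
  assumes "partial_set J" and "(s, a) \<in> J"
  shows "pmf (repair_policy J pol s) a = 0"
proof -
  obtain b where "(s, b) \<notin> J"
    using assms unfolding partial_set_def by blast
  then have "(s, SOME b. (s, b) \<notin> J) \<notin> J" by (rule someI)
  then have "(\<lambda>a. if (s, a) \<in> J then (SOME b. (s, b) \<notin> J) else a) -` {a} = {}"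
    using assms(2) by (auto split: if_splits)
  then show ?thesis by (simp add: repair_policy_def pmf_map)
qed

definition discounted_expectation ::
    "('s \<Rightarrow> 'a \<Rightarrow> 's pmf) \<Rightarrow> real \<Rightarrow> ('s \<Rightarrow> 'a pmf) \<Rightarrow> 's pmf \<Rightarrow> ('s \<times> 'a \<Rightarrow> real) \<Rightarrow> real" where
  "discounted_expectation P \<gamma> pol d f =
     (\<Sum>t. \<gamma> ^ t * measure_pmf.expectation (sa_dist P pol d t) f)"

lemma mdp_value_eq_discounted_expectation:
  "mdp_value P r \<gamma> pol d = discounted_expectation P \<gamma> pol d (\<lambda>(s, a). r s a)"
  unfolding mdp_value_def discounted_expectation_def ..

lemma summable_discounted_expectation:
  fixes f :: "'s \<times> 'a \<Rightarrow> real"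
  assumes "\<And>x. \<bar>f x\<bar> \<le> B" and "0 \<le> \<gamma>" "\<gamma> < 1"
  shows "summable (\<lambda>t. \<gamma> ^ t * measure_pmf.expectation (sa_dist P pol d t) f)"
proof (rule summable_comparison_test')
  show "summable (\<lambda>t. B * \<gamma> ^ t)"
    using assms by (intro summable_mult summable_geometric) auto
  show "norm (\<gamma> ^ t * measure_pmf.expectation (sa_dist P pol d t) f) \<le> B * \<gamma> ^ t" for t
  proof -
    have "\<bar>measure_pmf.expectation (sa_dist P pol d t) f\<bar> \<le> B"
      by (rule abs_expectation_pmf_le) (rule assms(1))
    then show ?thesis
      using assms(2) by (simp add: abs_mult) (metis mult.commute mult_left_mono zero_le_power)
  qed
qed

lemma discounted_expectation_add_scaled:
  fixes f g :: "'s \<times> 'a \<Rightarrow> real"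
  assumes "\<And>x. \<bar>f x\<bar> \<le> B" "\<And>x. \<bar>g x\<bar> \<le> B" and "0 \<le> \<gamma>" "\<gamma> < 1"
  shows "discounted_expectation P \<gamma> pol d (\<lambda>x. f x + c * g x)
    = discounted_expectation P \<gamma> pol d f + c * discounted_expectation P \<gamma> pol d g"
proof -
  let ?E = "\<lambda>f t. measure_pmf.expectation (sa_dist P pol d t) f"
  have "?E (\<lambda>x. f x + c * g x) t = ?E f t + c * ?E g t" for t
    using integrable_measure_pmf_bounded[of f B] integrable_measure_pmf_bounded[of g B] assms(1,2)
    by simp
  moreover have "summable (\<lambda>t. \<gamma> ^ t * ?E f t)" "summable (\<lambda>t. \<gamma> ^ t * ?E g t)"
    using assms by (blast intro: summable_discounted_expectation)+
  ultimately show ?thesis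
    unfolding discounted_expectation_def
    by (simp add: distrib_left mult.left_commute suminf_add[symmetric] suminf_mult summable_mult)
qed

lemma discounted_expectation_nonneg:
  fixes f :: "'s \<times> 'a \<Rightarrow> real"
  assumes "\<And>x. 0 \<le> f x" "\<And>x. f x \<le> B" and "0 \<le> \<gamma>" "\<gamma> < 1"
  shows "0 \<le> discounted_expectation P \<gamma> pol d f"
  unfolding discounted_expectation_def using assms
  by (intro suminf_nonneg summable_discounted_expectation[where B=B] mult_nonneg_nonneg
      integral_nonneg_AE) (auto intro: order.trans[OF _ assms(2)])

lemma discounted_expectation_le:
  fixes f :: "'s \<times> 'a \<Rightarrow> real"
  assumes "\<And>x. \<bar>f x\<bar> \<le> B" and "0 \<le> \<gamma>" "\<gamma> < 1"
  shows "discounted_expectation P \<gamma> pol d f \<le> B / (1 - \<gamma>)"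
proof -
  have "\<gamma> ^ t * measure_pmf.expectation (sa_dist P pol d t) f \<le> B * \<gamma> ^ t" for t
  proof -
    have "measure_pmf.expectation (sa_dist P pol d t) f \<le> B"
      using abs_expectation_pmf_le[of f B, OF assms(1)] by (rule abs_le_D1)
    then show ?thesis
      using assms(2) by (metis mult.commute mult_left_mono zero_le_power)
  qed
  then have "discounted_expectation P \<gamma> pol d f \<le> (\<Sum>t. B * \<gamma> ^ t)"
    unfolding discounted_expectation_def using assms
    by (intro suminf_le summable_discounted_expectation summable_mult summable_geometric) auto
  also have "\<dots> = B / (1 - \<gamma>)"
    using assms by (simp add: suminf_mult suminf_geometric divide_simps)
  finally show ?thesis .
qed

lemma discounted_expectation_mono_pmf:
  fixes f :: "'s \<times> 'a \<Rightarrow> real"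
  assumes "\<And>x. 0 \<le> f x" "\<And>x. f x \<le> B" and "0 \<le> \<gamma>" "\<gamma> < 1"
    and "\<And>t x. f x \<noteq> 0 \<Longrightarrow> pmf (sa_dist P pol1 d t) x \<le> pmf (sa_dist P pol2 d t) x"
  shows "discounted_expectation P \<gamma> pol1 d f \<le> discounted_expectation P \<gamma> pol2 d f"
  unfolding discounted_expectation_def using assms
  by (intro suminf_le summable_discounted_expectation[where B=B] mult_left_mono expectation_pmf_mono)
     (auto intro: order.trans[OF _ assms(2)])

lemma infsum_eq_of_nn_integral:
  fixes w :: "'b \<Rightarrow> real"
  assumes "\<And>x. 0 \<le> w x" and "0 \<le> c"
    and "(\<integral>\<^sup>+ x. ennreal (w x) \<partial>count_space A) = ennreal c"
  shows "infsum w A = c"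
proof -
  have "integrable (count_space A) w"
    by (rule integrableI_nn_integral_finite[OF _ _ assms(3)]) (auto simp: assms(1))
  then have "infsum w A = infsetsum w A"
    by (simp add: infsetsum_infsum abs_summable_on_def)
  also have "\<dots> = c"
    using infsetsum_conv_nn_integral[of A w] assms by simp
  finally show ?thesis .
qed

lemma summable_discounted_pmf:
  assumes "0 \<le> \<gamma>" "\<gamma> < 1"
  shows "summable (\<lambda>t. \<gamma> ^ t * pmf (sa_dist P pol d t) x)"
  by (rule summable_comparison_test'[where g="\<lambda>t. \<gamma> ^ t"])
     (use assms in \<open>auto simp: summable_geometric pmf_le_1 mult_left_le\<close>)

lemma nn_integral_occupancy:
  fixes f :: "'s \<times> 'a \<Rightarrow> real"
  assumes f: "\<And>x. 0 \<le> f x" "\<And>x. f x \<le> B" and \<gamma>: "0 \<le> \<gamma>" "\<gamma> < 1"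
  shows "(\<integral>\<^sup>+ x. ennreal (occupancy P \<gamma> pol d x * f x) \<partial>count_space UNIV)
    = ennreal ((1 - \<gamma>) * discounted_expectation P \<gamma> pol d f)"
proof -
  define p where "p t = sa_dist P pol d t" for t
  define e where "e t = measure_pmf.expectation (p t) f" for t
  have summable_pmf: "summable (\<lambda>t. \<gamma> ^ t * pmf (p t) x)" for x
    unfolding p_def using \<gamma> by (rule summable_discounted_pmf)
  have summable_e: "summable (\<lambda>t. \<gamma> ^ t * e t)"
    unfolding e_def p_def using f \<gamma> by (intro summable_discounted_expectation[where B=B]) auto
  have e_nonneg: "0 \<le> e t" for t
    unfolding e_def using f by (auto intro: integral_nonneg_AE)
  have pointwise: "ennreal (occupancy P \<gamma> pol d x * f x)
      = (\<Sum>t. ennreal ((1 - \<gamma>) * f x * (\<gamma> ^ t * pmf (p t) x)))" for x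
  proof -
    have "occupancy P \<gamma> pol d x * f x = (\<Sum>t. (1 - \<gamma>) * f x * (\<gamma> ^ t * pmf (p t) x))"
      unfolding occupancy_def p_def[symmetric]
      using suminf_mult[OF summable_pmf, of "(1 - \<gamma>) * f x"] by (simp add: algebra_simps)
    moreover have "(\<Sum>t. ennreal ((1 - \<gamma>) * f x * (\<gamma> ^ t * pmf (p t) x)))
        = ennreal (\<Sum>t. (1 - \<gamma>) * f x * (\<gamma> ^ t * pmf (p t) x))"
      by (rule suminf_ennreal2) (use f \<gamma> summable_pmf in \<open>auto intro: summable_mult\<close>)
    ultimately show ?thesis by simp
  qed
  have slice: "(\<integral>\<^sup>+ x. ennreal ((1 - \<gamma>) * f x * (\<gamma> ^ t * pmf (p t) x)) \<partial>count_space UNIV)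
      = ennreal ((1 - \<gamma>) * (\<gamma> ^ t * e t))" for t
  proof -
    have "(\<integral>\<^sup>+ x. ennreal ((1 - \<gamma>) * f x * (\<gamma> ^ t * pmf (p t) x)) \<partial>count_space UNIV)
       = (\<integral>\<^sup>+ x. ennreal ((1 - \<gamma>) * \<gamma> ^ t) * (ennreal (pmf (p t) x) * ennreal (f x)) \<partial>count_space UNIV)"
      by (intro nn_integral_cong) (simp add: ennreal_mult'[symmetric] \<gamma> f mult_ac)
    also have "\<dots> = ennreal ((1 - \<gamma>) * \<gamma> ^ t) * ennreal (e t)"
      unfolding e_def by (simp add: nn_integral_cmult ennreal_expectation_pmf[OF f])
    finally show ?thesis
      by (simp add: ennreal_mult'[symmetric] \<gamma> e_nonneg mult_ac)
  qed
  have "(\<integral>\<^sup>+ x. ennreal (occupancy P \<gamma> pol d x * f x) \<partial>count_space UNIV)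
      = (\<Sum>t. ennreal ((1 - \<gamma>) * (\<gamma> ^ t * e t)))"
    by (simp add: pointwise nn_integral_suminf slice)
  also have "\<dots> = ennreal ((1 - \<gamma>) * (\<Sum>t. \<gamma> ^ t * e t))"
    using \<gamma> e_nonneg summable_e by (simp add: suminf_ennreal2 summable_mult suminf_mult)
  finally show ?thesis
    unfolding discounted_expectation_def e_def p_def .
qed

lemma occ_expect_eq_discounted_expectation:
  fixes f :: "'s \<times> 'a \<Rightarrow> real"
  assumes "\<And>x. 0 \<le> f x" "\<And>x. f x \<le> B" and "0 \<le> \<gamma>" "\<gamma> < 1"
  shows "occ_expect P \<gamma> pol d f = (1 - \<gamma>) * discounted_expectation P \<gamma> pol d f"
  unfolding occ_expect_def
proof (rule infsum_eq_of_nn_integral[OF _ _ nn_integral_occupancy[OF assms]])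
  show "0 \<le> occupancy P \<gamma> pol d x * f x" for x
    unfolding occupancy_def
    using assms by (intro mult_nonneg_nonneg suminf_nonneg summable_discounted_pmf) simp_all
  show "0 \<le> (1 - \<gamma>) * discounted_expectation P \<gamma> pol d f"
    using discounted_expectation_nonneg[where f=f, OF assms] assms(4) by simp
qed

definition abs_intervention :: "('s \<times> 'a) set \<Rightarrow> ('s option \<times> 'a) set" where
  "abs_intervention I = {(Some s, a) | s a. (s, a) \<in> I}"

definition kept_reward :: "('s \<Rightarrow> 'a \<Rightarrow> real) \<Rightarrow> ('s \<times> 'a) set \<Rightarrow> 's option \<times> 'a \<Rightarrow> real" where
  "kept_reward r I = (\<lambda>(so, a). case so of None \<Rightarrow> 0 | Some s \<Rightarrow> if (s, a) \<in> I then 0 else r s a)"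

lemma kept_reward_bounds:
  assumes "\<And>s a. 0 \<le> r s a \<and> r s a \<le> 1"
  shows "0 \<le> kept_reward r I x" "kept_reward r I x \<le> 1"
  using assms by (auto simp: kept_reward_def split: option.split prod.split)

lemma discounted_kept_reward_le:
  assumes "\<And>s a. 0 \<le> r s a \<and> r s a \<le> 1" and "0 \<le> \<gamma>" "\<gamma> < 1"
  shows "discounted_expectation P \<gamma> pol d (kept_reward r I) \<le> 1 / (1 - \<gamma>)"
proof (rule discounted_expectation_le)
  show "\<bar>kept_reward r I x\<bar> \<le> 1" for x
    using kept_reward_bounds[OF assms(1), where I=I and x=x] by simp
qed (use assms in simp_all)

lemma abs_r_eq_kept_reward:
  "abs_r r I R so a = kept_reward r I (so, a) + R * indicator (abs_intervention I) (so, a)"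
  by (auto simp: abs_r_def kept_reward_def abs_intervention_def split: option.split)

lemma partial_set_abs_intervention: "partial_set I \<Longrightarrow> partial_set (abs_intervention I)"
  by (fastforce simp: partial_set_def abs_intervention_def)

lemma pmf_abs_P_Some_nonzero:
  assumes "pmf (abs_P P I x a) (Some s) \<noteq> 0"
  shows "\<exists>s'. x = Some s' \<and> (s', a) \<notin> I"
  using assms by (auto simp: abs_P_def split: option.splits if_splits)

lemma mdp_value_abs_eq:
  assumes "\<And>s a. 0 \<le> r s a \<and> r s a \<le> 1" and "0 \<le> \<gamma>" "\<gamma> < 1"
  shows "mdp_value (abs_P P I) (abs_r r I R) \<gamma> pol d =
    discounted_expectation (abs_P P I) \<gamma> pol d (kept_reward r I)
    + R * discounted_expectation (abs_P P I) \<gamma> pol d (indicator (abs_intervention I))"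
proof -
  have "(\<lambda>(so, a). abs_r r I R so a)
      = (\<lambda>x. kept_reward r I x + R * indicator (abs_intervention I) x)"
    by (auto simp: abs_r_eq_kept_reward)
  then show ?thesis
    unfolding mdp_value_eq_discounted_expectation
    by (simp add: discounted_expectation_add_scaled[where B=1] kept_reward_bounds[OF assms(1)] assms)
qed

lemma discounted_kept_reward_le_repair:
  assumes "\<And>s a. 0 \<le> r s a \<and> r s a \<le> 1" and "0 \<le> \<gamma>" "\<gamma> < 1"
  shows "discounted_expectation (abs_P P I) \<gamma> pol d (kept_reward r I)
    \<le> discounted_expectation (abs_P P I) \<gamma> (repair_policy (abs_intervention I) pol) d (kept_reward r I)"
proof (rule discounted_expectation_mono_pmf[where B=1])
  let ?G = "{(Some s, a) | s a. (s, a) \<notin> I}"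
  fix t x
  assume "kept_reward r I x \<noteq> 0"
  then have "x \<in> ?G" by (cases x) (auto simp: kept_reward_def split: option.splits if_splits)
  then show "pmf (sa_dist (abs_P P I) pol d t) x
      \<le> pmf (sa_dist (abs_P P I) (repair_policy (abs_intervention I) pol) d t) x"
  proof (rule pmf_sa_dist_mono_on[where G="?G", rotated 2])
    show "(x, b) \<in> ?G" if "(y, a) \<in> ?G" "pmf (abs_P P I x b) y \<noteq> 0" for x b y a
      using that by (auto dest!: pmf_abs_P_Some_nonzero)
    show "pmf (pol y) a \<le> pmf (repair_policy (abs_intervention I) pol y) a" if "(y, a) \<in> ?G" for y a
      using that by (intro pmf_repair_policy_ge) (auto simp: abs_intervention_def)
  qed
qed (simp_all add: kept_reward_bounds[OF assms(1)] assms(2,3))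

lemma discounted_intervention_repair_eq_0:
  assumes "partial_set I"
  shows "discounted_expectation (abs_P P I) \<gamma> (repair_policy (abs_intervention I) pol) d
    (indicator (abs_intervention I)) = 0"
proof -
  let ?J = "abs_intervention I"
  have "measure_pmf.expectation (sa_dist (abs_P P I) (repair_policy ?J pol) d t) (indicator ?J) = (0::real)"
    for t
  proof -
    have "AE x in measure_pmf (sa_dist (abs_P P I) (repair_policy ?J pol) d t). indicator ?J x = (0::real)"
    proof (rule AE_pmfI)
      fix x
      assume "x \<in> set_pmf (sa_dist (abs_P P I) (repair_policy ?J pol) d t)"
      moreover have "x \<in> ?J \<Longrightarrow> pmf (sa_dist (abs_P P I) (repair_policy ?J pol) d t) x = 0"
        using pmf_repair_policy_eq_0[OF partial_set_abs_intervention[OF assms]]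
        by (rule pmf_sa_dist_eq_0)
      ultimately show "indicator ?J x = (0::real)" by (auto simp: set_pmf_iff indicator_def)
    qed
    then show ?thesis by (subst integral_cong_AE[where g="\<lambda>_. 0"]) auto
  qed
  then show ?thesis by (simp add: discounted_expectation_def)
qed

lemma mdp_value_abs_repair_ge:
  assumes "\<And>s a. 0 \<le> r s a \<and> r s a \<le> 1" and "0 \<le> \<gamma>" "\<gamma> < 1" and "partial_set I"
  shows "discounted_expectation (abs_P P I) \<gamma> pol d (kept_reward r I)
    \<le> mdp_value (abs_P P I) (abs_r r I R) \<gamma> (repair_policy (abs_intervention I) pol) d"
proof -
  let ?pol' = "repair_policy (abs_intervention I) pol"
  have "discounted_expectation (abs_P P I) \<gamma> pol d (kept_reward r I)
      \<le> discounted_expectation (abs_P P I) \<gamma> ?pol' d (kept_reward r I)"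
    using assms(1-3) by (rule discounted_kept_reward_le_repair)
  also have "\<dots> = mdp_value (abs_P P I) (abs_r r I R) \<gamma> ?pol' d"
    unfolding mdp_value_abs_eq[OF assms(1-3)] discounted_intervention_repair_eq_0[OF assms(4)] by simp
  finally show ?thesis .
qed

theorem mainTheorem16:
  fixes P :: "'s::countable \<Rightarrow> 'a::countable \<Rightarrow> 's pmf"
    and r :: "'s \<Rightarrow> 'a \<Rightarrow> real"
    and \<gamma> :: real
    and d0 :: "'s pmf"
    and s_tri s_circ :: 's
    and Qb :: "'s \<Rightarrow> 'a \<Rightarrow> real"
    and mu :: "'s \<Rightarrow> 'a pmf"
    and \<eta> R :: real
  defines "Ssafe \<equiv> UNIV - {s_tri, s_circ}"
  defines "I \<equiv> intervention_set Ssafe Qb mu \<eta>"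
  defines "Vt \<equiv> (\<lambda>pol. mdp_value (abs_P P I) (abs_r r I R) \<gamma> pol (map_pmf Some d0))"
  defines "Vstar \<equiv> (SUP pol. Vt pol)"
  defines "occE \<equiv> (\<lambda>pol f. occ_expect (abs_P P I) \<gamma> pol (map_pmf Some d0) f)"
  assumes r_range: "\<And>s a. 0 \<le> r s a \<and> r s a \<le> 1"
    and gamma: "0 \<le> \<gamma>" "\<gamma> < 1"
    and unsafe_distinct: "s_tri \<noteq> s_circ"
    and tri_step: "\<And>a. P s_tri a = return_pmf s_circ"
    and circ_absorb: "\<And>a. P s_circ a = return_pmf s_circ"
    and r_unsafe: "\<And>a. r s_tri a = 0" "\<And>a. r s_circ a = 0"
    and Qb_range: "\<And>s a. s \<in> Ssafe \<Longrightarrow> 0 \<le> Qb s a \<and> Qb s a \<le> 1"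
    and eta: "0 \<le> \<eta>" "\<eta> \<le> 1"
    and R_nonpos: "R \<le> 0"
    and partial: "partial_set I"
  shows "(\<forall>pol. Vstar \<ge> (1 / (1 - \<gamma>)) * occE pol (\<lambda>(so, a). case so of None \<Rightarrow> 0
                 | Some s \<Rightarrow> r s a * (if s \<in> Ssafe \<and> (s, a) \<notin> I then 1 else 0)))
       \<and> ((\<exists>pol. Vt pol = Vstar) \<longrightarrow>
            (\<exists>pol. Vt pol = Vstar \<and> occE pol (\<lambda>(so, a). case so of None \<Rightarrow> 0
                 | Some s \<Rightarrow> if (s, a) \<in> I then 1 else 0) = 0))
       \<and> (R < 0 \<longrightarrow> (\<forall>pol. Vt pol = Vstar \<longrightarrow> occE pol (\<lambda>(so, a). case so of None \<Rightarrow> 0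
                 | Some s \<Rightarrow> if (s, a) \<in> I then 1 else 0) = 0))"
proof -
  let ?J = "abs_intervention I"
  define D where "D pol f = discounted_expectation (abs_P P I) \<gamma> pol (map_pmf Some d0) f" for pol f
  have kept: "(\<lambda>(so, a). case so of None \<Rightarrow> 0
      | Some s \<Rightarrow> r s a * (if s \<in> Ssafe \<and> (s, a) \<notin> I then 1 else 0)) = kept_reward r I"
    using r_unsafe by (auto simp: fun_eq_iff kept_reward_def Ssafe_def split: option.split)
  have intervened: "(\<lambda>(so, a). case so of None \<Rightarrow> 0 | Some s \<Rightarrow> if (s, a) \<in> I then 1 else 0)
      = (indicator ?J :: _ \<Rightarrow> real)"
    by (auto simp: fun_eq_iff abs_intervention_def split: option.split)
  have occE: "occE pol f = (1 - \<gamma>) * D pol f" if "\<And>x. 0 \<le> f x" "\<And>x. f x \<le> 1" for pol f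
    unfolding occE_def D_def using that gamma by (rule occ_expect_eq_discounted_expectation)
  have Vt_eq: "Vt pol = D pol (kept_reward r I) + R * D pol (indicator ?J)" for pol
    unfolding Vt_def D_def using r_range gamma by (rule mdp_value_abs_eq)
  have intervened_nonneg: "0 \<le> D pol (indicator ?J)" for pol
    unfolding D_def using gamma by (intro discounted_expectation_nonneg[where B=1]) simp_all
  have Vt_le_kept: "Vt pol \<le> D pol (kept_reward r I)" for pol
    using Vt_eq[of pol] intervened_nonneg[of pol] R_nonpos by (simp add: mult_nonpos_nonneg)
  have kept_le: "D pol (kept_reward r I) \<le> 1 / (1 - \<gamma>)" for pol
    unfolding D_def using r_range gamma by (rule discounted_kept_reward_le)
  have "bdd_above (range Vt)"
    using order.trans[OF Vt_le_kept kept_le] by (intro bdd_aboveI2)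
  then have Vt_le_Vstar: "Vt pol \<le> Vstar" for pol
    unfolding Vstar_def by (rule cSUP_upper[rotated]) simp
  have repair: "D pol (kept_reward r I) \<le> Vt (repair_policy ?J pol)" for pol
    unfolding D_def Vt_def using r_range gamma partial by (rule mdp_value_abs_repair_ge)
  have repair_never_intervenes: "occE (repair_policy ?J pol) (indicator ?J) = 0" for pol
    using occE discounted_intervention_repair_eq_0[OF partial] by (simp add: D_def)
  show ?thesis
    unfolding kept intervened
  proof (intro conjI allI impI)
    fix pol
    have "occE pol (kept_reward r I) = (1 - \<gamma>) * D pol (kept_reward r I)"
      by (rule occE) (rule kept_reward_bounds[OF r_range])+
    then show "Vstar \<ge> 1 / (1 - \<gamma>) * occE pol (kept_reward r I)"
      using repair[of pol] Vt_le_Vstar[of "repair_policy ?J pol"] gamma by simp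
  next
    assume "\<exists>pol. Vt pol = Vstar"
    then obtain pol where "Vt pol = Vstar" by blast
    then have "Vt (repair_policy ?J pol) = Vstar"
      using Vt_le_kept[of pol] repair[of pol] Vt_le_Vstar[of "repair_policy ?J pol"] by linarith
    then show "\<exists>pol. Vt pol = Vstar \<and> occE pol (indicator ?J) = 0"
      using repair_never_intervenes by blast
  next
    fix pol
    assume "R < 0" and "Vt pol = Vstar"
    then have "0 \<le> R * D pol (indicator ?J)"
      using Vt_eq[of pol] repair[of pol] Vt_le_Vstar[of "repair_policy ?J pol"] by linarith
    then have "D pol (indicator ?J) = 0"
      using \<open>R < 0\<close> intervened_nonneg[of pol] by (simp add: zero_le_mult_iff)
    then show "occE pol (indicator ?J) = 0"
      using occE by simp
  qed
qed

end
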